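(* Let $X\subseteq\mathbb{R}^n$ be an open bounded convex set. If $U$ is a non-empty convex subset of $X$ which is closed in $X$ and homeomorphic to $\mathbb{R}^m$, then $U=X\cap A$ for some $m$-dimensional affine subspace $A$ of $\mathbb{R}^n$. *)

theory Defs
  imports "HOL-Analysis.Analysis"
begin

text \<open>The Euclidean space of dimension m, for an arbitrary natural number m
(including m = 0), realised as the finitely supported sequences
nat => real vanishing from index m on, with the subspace topology of the
product topology on nat => real (the standard topology instance on function
types).  This is homeomorphic (indeed isometric) to real^m.\<close>
definition Rspace :: "nat \<Rightarrow> (nat \<Rightarrow> real) set" where
  "Rspace m = {x. \<forall>i\<ge>m. x i = 0}"

end

theory Submission
  imports Defs "HOL-Homology.Homology"
begin

text \<open>By invariance of dimension a convex set homeomorphic to \<open>\<real>\<^sup>m\<close> has affine dimension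
  \<open>m\<close>, so it is homeomorphic to its affine hull \<open>A\<close>, and invariance of domain makes it open
  in \<open>A\<close>. Being also closed in the connected set \<open>X \<inter> A\<close>, it is all of \<open>X \<inter> A\<close>.\<close>

lemma top_of_set_Rspace: "top_of_set (Rspace m) = Euclidean_space m"
  by (simp add: Rspace_def Euclidean_space_def euclidean_product_topology)

lemma Euclidean_space_eq_subtopology_of_le:
  assumes "n \<le> m"
  shows "Euclidean_space n = subtopology (Euclidean_space m) (topspace (Euclidean_space n))"
  by (metis Euclidean_space_def assms inf.absorb_iff2 subset_Euclidean_space
      subtopology_subtopology topspace_Euclidean_space)

lemma le_DIM_if_homeomorphic_Euclidean_space:
  fixes U :: "'a::euclidean_space set"
  assumes "top_of_set U homeomorphic_space Euclidean_space m"
  shows "m \<le> DIM('a)"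
proof (rule ccontr)
  \<comment> \<open>Otherwise \<open>\<real>\<^sup>n\<^sup>+\<^sup>1 \<subseteq> \<real>\<^sup>m\<close> would embed into \<open>U \<subseteq> \<real>\<^sup>n\<close>.\<close>
  assume "\<not> m \<le> DIM('a)"
  then have sub: "Euclidean_space DIM('a \<times> real)
      = subtopology (Euclidean_space m) (topspace (Euclidean_space DIM('a \<times> real)))"
    by (intro Euclidean_space_eq_subtopology_of_le) simp
  have "top_of_set (UNIV :: ('a \<times> real) set) homeomorphic_space Euclidean_space DIM('a \<times> real)"
    using homeomorphic_subspace_Euclidean_space_dim[of "UNIV :: ('a \<times> real) set"]
    by (simp only: subspace_UNIV dim_UNIV)
  then obtain k :: "'a \<times> real \<Rightarrow> nat \<Rightarrow> real"
    where k: "homeomorphic_map euclidean (Euclidean_space DIM('a \<times> real)) k"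
    by (auto simp: homeomorphic_space)
  from assms obtain h where h: "homeomorphic_map (Euclidean_space m) (top_of_set U) h"
    by (meson homeomorphic_space homeomorphic_space_sym)
  have k_cont: "continuous_map euclidean (Euclidean_space m) k"
    using k sub by (metis continuous_map_in_subtopology homeomorphic_imp_continuous_map)
  then have "continuous_map euclidean (top_of_set U) (h \<circ> k)"
    using h by (meson continuous_map_compose homeomorphic_imp_continuous_map)
  then have "continuous_on UNIV (h \<circ> k)"
    by (simp add: continuous_map_in_subtopology)
  moreover have "inj (h \<circ> k)"
  proof (rule comp_inj_on)
    show "inj k"
      using homeomorphic_imp_injective_map[OF k] by simp
    show "inj_on h (range k)"
      using homeomorphic_imp_injective_map[OF h] continuous_map_image_subset_topspace[OF k_cont]
      by (auto intro: inj_on_subset)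
  qed
  ultimately have "DIM('a \<times> real) \<le> DIM('a)"
    using invariance_of_dimension[OF _ open_UNIV] by blast
  then show False by simp
qed

lemma openin_affine_hull_if_homeomorphic_affine:
  fixes U :: "'a::euclidean_space set" and T :: "'b::euclidean_space set"
  assumes "convex U" and "affine T" and "T homeomorphic U"
  shows "openin (top_of_set (affine hull U)) U"
proof -
  obtain f g where fg: "homeomorphism T U f g"
    using assms(3) unfolding homeomorphic_def by blast
  have "aff_dim (affine hull U) \<le> aff_dim T"
    using homeomorphic_convex_sets[OF affine_imp_convex[OF assms(2)] assms(1,3)] by simp
  then have "openin (top_of_set (affine hull U)) (f ` T)"
  proof (rule invariance_of_domain_affine_sets[OF openin_subtopology_self assms(2) affine_affine_hull])
    show "continuous_on T f"
      by (rule homeomorphism_cont1[OF fg])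
    show "f ` T \<subseteq> affine hull U"
      unfolding homeomorphism_image1[OF fg] by (rule hull_subset)
    show "inj_on f T"
      by (rule inj_on_inverseI[where g = g]) (rule homeomorphism_apply1[OF fg])
  qed
  then show ?thesis
    using homeomorphism_image1[OF fg] by simp
qed

lemma eq_Int_affine_hull_if_clopen:
  fixes X U :: "'a::real_normed_vector set"
  assumes "convex X" and "U \<noteq> {}" and "U \<subseteq> X"
    and "closedin (top_of_set X) U" and "openin (top_of_set (affine hull U)) U"
  shows "U = X \<inter> affine hull U"
proof -
  have U_sub: "U \<subseteq> X \<inter> affine hull U"
    using assms(3) hull_subset[of U affine] by (rule Int_greatest)
  have "connected (X \<inter> affine hull U)"
    by (simp add: assms(1) affine_imp_convex convex_Int convex_connected)
  moreover have "openin (top_of_set (X \<inter> affine hull U)) U"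
    using openin_subset_trans[OF assms(5) U_sub] by simp
  moreover have "closedin (top_of_set (X \<inter> affine hull U)) U"
    using closedin_subset_trans[OF assms(4) U_sub] by simp
  ultimately show ?thesis
    using assms(2) unfolding connected_clopen by blast
qed

theorem lemma5p3:
  fixes X U :: "'a::euclidean_space set" and m :: nat
  assumes "open X" and "bounded X" and "convex X"
    and "U \<noteq> {}" and "convex U" and "U \<subseteq> X"
    and "closedin (top_of_set X) U"
    and "U homeomorphic Rspace m"
  shows "\<exists>A. affine A \<and> aff_dim A = int m \<and> U = X \<inter> A"
proof -
  have U_Euclidean: "top_of_set U homeomorphic_space Euclidean_space m"
    using assms(8) by (simp flip: top_of_set_Rspace)
  obtain S :: "'a set" where S: "subspace S" "dim S = m"
    using choose_subspace_of_subspace[of m UNIV]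
      le_DIM_if_homeomorphic_Euclidean_space[OF U_Euclidean]
    by (auto simp: dim_UNIV)
  have "top_of_set S homeomorphic_space Euclidean_space m"
    using S homeomorphic_subspace_Euclidean_space by blast
  then have "S homeomorphic U"
    using U_Euclidean homeomorphic_space_sym homeomorphic_space_trans
    unfolding homeomorphic_space_iff_homeomorphic[symmetric] by blast
  then have "aff_dim U = int m"
    using homeomorphic_convex_sets[OF subspace_imp_convex[OF S(1)] assms(5)]
      aff_dim_subspace[OF S(1)] S(2)
    by simp
  moreover have "openin (top_of_set (affine hull U)) U"
    using openin_affine_hull_if_homeomorphic_affine[OF assms(5) subspace_imp_affine[OF S(1)]]
      \<open>S homeomorphic U\<close>
    by blast
  ultimately show ?thesis
    using eq_Int_affine_hull_if_clopen[OF assms(3,4,6,7)] by (intro exI[of _ "affine hull U"]) simp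
qed

end
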